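(* Let $G=(V,E,c_V^G,c_E^G)$ and $H=(V,E,c_V^H,c_E^H)$ be two capacitated graphs on the same graph $(V,E)$ that differ only in the capacity of one vertex $s$ (all other vertex capacities and all edge capacities coincide). Assume that in the executions of Rising-Tide on $G$ and on $H$ no two vertices become saturated simultaneously, and that the dependency graphs coincide, $D_G=D_H$. Let $\mu_G,\mu_H$ be the outputs of Rising-Tide on $G$ and $H$. Then \[\sum_i\left|\Big(c_V^G(i)-\sum_j\mu_G(i,j)\Big)-\Big(c_V^H(i)-\sum_j\mu_H(i,j)\Big)\right|\le|c_V^G(s)-c_V^H(s)|.\]
   Context: Capacitated graphs have nonnegative vertex capacities $c_V$ and edge capacities $c_E$; edges may include self-loops, and in $\sum_j\mu(i,j)$ a self-loop at $i$ counts once. A feasible fractional matching $\mu:E\to\mathbb{R}_{\ge0}$ satisfies $\mu(e)\le c_E(e)$ and $\sum_j\mu(i,j)\le c_V(i)$. Vertex $i$ is saturated if $\sum_j\mu(i,j)=c_V(i)$; edge $e$ is saturated if $\mu(e)=c_E(e)$. Rising-Tide: set $E'=\{e\in E:c_E(e)>0\}$ and $\mu\equiv0$; while $E'\ne\emptyset$: choose the maximum $\delta\ge0$ such that $\mu+\delta\mathbf{1}_{E'}$ is feasible, set $\mu\gets\mu+\delta\mathbf{1}_{E'}$, and remove from $E'$ every edge $(i,j)$ such that $i$, $j$, or $(i,j)$ is saturated; return $\mu$. Dependency graph $D_G$: the directed graph on $V$ which, for each edge $(i,j)\in E$, contains $j\to i$ if $i$ is saturated at the moment $(i,j)$ is removed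 from $E'$ in the execution on $G$, and contains $i\to j$ if $j$ is saturated at that moment. *)

theory Defs
  imports Complex_Main
begin

text \<open>Undirected edges are represented as sets of endpoints: a proper edge (i,j) is {i,j}
  (card 2) and a self-loop at i is {i} (card 1). The load of vertex i is the sum of mu over all edges containing i,
  so a self-loop at i counts once.\<close>

definition cap_graph :: "'a set \<Rightarrow> 'a set set \<Rightarrow> ('a \<Rightarrow> real) \<Rightarrow> ('a set \<Rightarrow> real) \<Rightarrow> bool" where
  "cap_graph V E cV cE \<longleftrightarrow> finite V \<and> (\<forall>e\<in>E. e \<subseteq> V \<and> (card e = 1 \<or> card e = 2))
     \<and> (\<forall>i\<in>V. 0 \<le> cV i) \<and> (\<forall>e\<in>E. 0 \<le> cE e)"

definition load :: "'a set set \<Rightarrow> ('a set \<Rightarrow> real) \<Rightarrow> 'a \<Rightarrow> real" where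
  "load E mu i = (\<Sum>e\<in>{e\<in>E. i \<in> e}. mu e)"

definition feasible :: "'a set \<Rightarrow> 'a set set \<Rightarrow> ('a \<Rightarrow> real) \<Rightarrow> ('a set \<Rightarrow> real) \<Rightarrow> ('a set \<Rightarrow> real) \<Rightarrow> bool" where
  "feasible V E cV cE mu \<longleftrightarrow> (\<forall>e\<in>E. 0 \<le> mu e \<and> mu e \<le> cE e) \<and> (\<forall>i\<in>V. load E mu i \<le> cV i)"

definition vsat :: "'a set set \<Rightarrow> ('a \<Rightarrow> real) \<Rightarrow> ('a set \<Rightarrow> real) \<Rightarrow> 'a \<Rightarrow> bool" where
  "vsat E cV mu i \<longleftrightarrow> load E mu i = cV i"

definition esat :: "('a set \<Rightarrow> real) \<Rightarrow> ('a set \<Rightarrow> real) \<Rightarrow> 'a set \<Rightarrow> bool" where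
  "esat cE mu e \<longleftrightarrow> mu e = cE e"

definition rt_step :: "'a set \<Rightarrow> 'a set set \<Rightarrow> ('a \<Rightarrow> real) \<Rightarrow> ('a set \<Rightarrow> real)
    \<Rightarrow> ('a set \<Rightarrow> real) \<times> 'a set set \<Rightarrow> ('a set \<Rightarrow> real) \<times> 'a set set" where
  "rt_step V E cV cE st =
     (let mu = fst st; F = snd st in
      if F = {} then st else
      let d = (GREATEST d::real. 0 \<le> d \<and>
                 feasible V E cV cE (\<lambda>e. mu e + (if e \<in> F then d else 0)));
          mu' = (\<lambda>e. mu e + (if e \<in> F then d else 0));
          F' = {e\<in>F. \<not> esat cE mu' e \<and> (\<forall>i\<in>e. \<not> vsat E cV mu' i)}
      in (mu', F'))"

definition rt_state :: "'a set \<Rightarrow> 'a set set \<Rightarrow> ('a \<Rightarrow> real) \<Rightarrow> ('a set \<Rightarrow> real)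
    \<Rightarrow> nat \<Rightarrow> ('a set \<Rightarrow> real) \<times> 'a set set" where
  "rt_state V E cV cE k = (rt_step V E cV cE ^^ k) (\<lambda>_. 0, {e\<in>E. 0 < cE e})"

definition rising_tide :: "'a set \<Rightarrow> 'a set set \<Rightarrow> ('a \<Rightarrow> real) \<Rightarrow> ('a set \<Rightarrow> real) \<Rightarrow> ('a set \<Rightarrow> real)" where
  "rising_tide V E cV cE =
     fst (rt_state V E cV cE (LEAST k. snd (rt_state V E cV cE k) = {}))"

definition no_simul_sat :: "'a set \<Rightarrow> 'a set set \<Rightarrow> ('a \<Rightarrow> real) \<Rightarrow> ('a set \<Rightarrow> real) \<Rightarrow> bool" where
  "no_simul_sat V E cV cE \<longleftrightarrow>
     (\<forall>k. card {i\<in>V. vsat E cV (fst (rt_state V E cV cE (Suc k))) i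
                    \<and> \<not> vsat E cV (fst (rt_state V E cV cE k)) i} \<le> 1)"

text \<open>Dependency graph: arc (j,i) (i.e. j \<rightarrow> i) for an edge {i,j} removed from E' in
  iteration k with i saturated right after that iteration.\<close>
definition dep_graph :: "'a set \<Rightarrow> 'a set set \<Rightarrow> ('a \<Rightarrow> real) \<Rightarrow> ('a set \<Rightarrow> real) \<Rightarrow> ('a \<times> 'a) set" where
  "dep_graph V E cV cE =
     {(j, i) | i j k. {i, j} \<in> E \<and> {i, j} \<in> snd (rt_state V E cV cE k)
        \<and> {i, j} \<notin> snd (rt_state V E cV cE (Suc k))
        \<and> vsat E cV (fst (rt_state V E cV cE (Suc k))) i}"

end

theory Submission
  imports Defs
begin

text \<open>Write \<delta> = mu_H - mu_G. Call an edge {i, j} frozen by i if the common dependency graph has the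
  arc j \<rightarrow> i. An edge frozen by neither endpoint ends saturated in both runs, so \<delta> vanishes on it.
  The edges frozen by i all leave the active set in the round in which i saturates, when all
  active edges carry the same value; so \<delta> is constant on them and i ends saturated in both runs.
  Hence at every vertex the residual difference plus the \<delta>-mass on the edges frozen by i is at
  most |c_G(i) - c_H(i)| plus the \<delta>-mass on the other edges at i. An edge frozen by one endpoint
  has at most one other endpoint, so after summing over the vertices the second masses are
  absorbed by the first, and only |c_G(s) - c_H(s)| remains.\<close>

section \<open>One round of Rising-Tide\<close>

definition raise_on :: "'a set set \<Rightarrow> real \<Rightarrow> ('a set \<Rightarrow> real) \<Rightarrow> 'a set \<Rightarrow> real" where
  "raise_on F d mu = (\<lambda>e. mu e + (if e \<in> F then d else 0))"

definition tide_increment :: "'a set \<Rightarrow> 'a set set \<Rightarrow> ('a \<Rightarrow> real) \<Rightarrow> ('a set \<Rightarrow> real)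
    \<Rightarrow> ('a set \<Rightarrow> real) \<Rightarrow> 'a set set \<Rightarrow> real" where
  "tide_increment V E cV cE mu F =
     (GREATEST d. 0 \<le> d \<and> feasible V E cV cE (raise_on F d mu))"

text \<open>The largest admissible increment is the minimum of these bounds: the residual capacity
  of each raised edge, and the residual capacity of each vertex shared among its raised edges.\<close>
definition raise_limits :: "'a set \<Rightarrow> 'a set set \<Rightarrow> ('a \<Rightarrow> real) \<Rightarrow> ('a set \<Rightarrow> real)
    \<Rightarrow> ('a set \<Rightarrow> real) \<Rightarrow> 'a set set \<Rightarrow> real set" where
  "raise_limits V E cV cE mu F =
     (\<lambda>e. cE e - mu e) ` F \<union>
     (\<lambda>i. (cV i - load E mu i) / real (card {e\<in>F. i \<in> e})) ` {i\<in>V. \<exists>e\<in>F. i \<in> e}"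

lemma rt_step_nonempty:
  assumes "F \<noteq> {}"
  shows "rt_step V E cV cE (mu, F) =
    (let mu' = raise_on F (tide_increment V E cV cE mu F) mu
     in (mu', {e\<in>F. \<not> esat cE mu' e \<and> (\<forall>i\<in>e. \<not> vsat E cV mu' i)}))"
  using assms by (simp add: rt_step_def raise_on_def tide_increment_def Let_def)

lemma load_raise_on:
  assumes "finite E" and "F \<subseteq> E"
  shows "load E (raise_on F x mu) i = load E mu i + x * real (card {e\<in>F. i \<in> e})"
proof -
  have "{e\<in>E. i \<in> e} \<inter> F = {e\<in>F. i \<in> e}" using assms(2) by blast
  then have "(\<Sum>e\<in>{e\<in>E. i \<in> e}. if e \<in> F then x else 0) = x * real (card {e\<in>F. i \<in> e})"
    using assms(1) by (simp add: sum.inter_restrict[symmetric])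
  then show ?thesis by (simp add: load_def raise_on_def sum.distrib)
qed

lemma card_incident_pos:
  assumes "finite F"
  shows "0 < card {e\<in>F. i \<in> e} \<longleftrightarrow> (\<exists>e\<in>F. i \<in> e)"
  using assms by (auto simp: card_gt_0_iff)

lemma feasible_raise_on_iff:
  assumes "finite E" and feas: "feasible V E cV cE mu" and "F \<subseteq> E" and "0 \<le> x"
  shows "feasible V E cV cE (raise_on F x mu) \<longleftrightarrow> (\<forall>c\<in>raise_limits V E cV cE mu F. x \<le> c)"
proof -
  have fin: "finite F" using assms(1,3) by (rule finite_subset[rotated])
  have edge: "(\<forall>e\<in>E. 0 \<le> raise_on F x mu e \<and> raise_on F x mu e \<le> cE e)
      \<longleftrightarrow> (\<forall>e\<in>F. x \<le> cE e - mu e)"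
    using feas \<open>F \<subseteq> E\<close> \<open>0 \<le> x\<close> by (force simp: feasible_def raise_on_def)
  have vertex: "load E (raise_on F x mu) i \<le> cV i
      \<longleftrightarrow> ((\<exists>e\<in>F. i \<in> e) \<longrightarrow> x \<le> (cV i - load E mu i) / real (card {e\<in>F. i \<in> e}))"
    if "i \<in> V" for i
  proof (cases "\<exists>e\<in>F. i \<in> e")
    case True
    then have "0 < real (card {e\<in>F. i \<in> e})" using card_incident_pos[OF fin] by simp
    then show ?thesis using True by (simp add: load_raise_on[OF assms(1,3)] pos_le_divide_eq algebra_simps)
  next
    case False
    then have "card {e\<in>F. i \<in> e} = 0" using card_incident_pos[OF fin, of i] by simp
    then show ?thesis using False feas that by (simp add: load_raise_on[OF assms(1,3)] feasible_def)
  qed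
  have "(\<forall>i\<in>V. load E (raise_on F x mu) i \<le> cV i) \<longleftrightarrow>
      (\<forall>i\<in>V. (\<exists>e\<in>F. i \<in> e) \<longrightarrow> x \<le> (cV i - load E mu i) / real (card {e\<in>F. i \<in> e}))"
    by (rule ball_cong[OF refl vertex])
  moreover have "(\<forall>c\<in>raise_limits V E cV cE mu F. x \<le> c) \<longleftrightarrow> (\<forall>e\<in>F. x \<le> cE e - mu e) \<and>
      (\<forall>i\<in>V. (\<exists>e\<in>F. i \<in> e) \<longrightarrow> x \<le> (cV i - load E mu i) / real (card {e\<in>F. i \<in> e}))"
    unfolding raise_limits_def by blast
  ultimately show ?thesis
    unfolding feasible_def edge by simp
qed

lemma raise_limits_nonneg:
  assumes "feasible V E cV cE mu" and "F \<subseteq> E" and "c \<in> raise_limits V E cV cE mu F"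
  shows "0 \<le> c"
  using assms by (force simp: raise_limits_def feasible_def)

lemma tide_increment_eq_Min:
  assumes "finite V" and "finite E" and feas: "feasible V E cV cE mu"
    and "F \<subseteq> E" and "F \<noteq> {}"
  shows "tide_increment V E cV cE mu F = Min (raise_limits V E cV cE mu F)"
    and "0 \<le> tide_increment V E cV cE mu F"
proof -
  let ?C = "raise_limits V E cV cE mu F"
  have fin: "finite ?C" and ne: "?C \<noteq> {}"
    using assms finite_subset[OF \<open>F \<subseteq> E\<close>] by (auto simp: raise_limits_def)
  have Min_nonneg: "0 \<le> Min ?C"
    using fin ne raise_limits_nonneg[OF feas \<open>F \<subseteq> E\<close>] by simp
  show eq: "tide_increment V E cV cE mu F = Min ?C"
    unfolding tide_increment_def
  proof (rule Greatest_equality)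
    show "0 \<le> Min ?C \<and> feasible V E cV cE (raise_on F (Min ?C) mu)"
      using Min_nonneg fin feasible_raise_on_iff[OF assms(2,3,4)] by auto
  next
    fix y assume "0 \<le> y \<and> feasible V E cV cE (raise_on F y mu)"
    then show "y \<le> Min ?C"
      using fin ne feasible_raise_on_iff[OF assms(2,3,4)] by auto
  qed
  show "0 \<le> tide_increment V E cV cE mu F"
    using eq Min_nonneg by simp
qed

lemma feasible_raise_tide_increment:
  assumes "finite V" and "finite E" and "feasible V E cV cE mu" and "F \<subseteq> E" and "F \<noteq> {}"
  shows "feasible V E cV cE (raise_on F (tide_increment V E cV cE mu F) mu)"
proof -
  have "finite (raise_limits V E cV cE mu F)"
    using assms finite_subset[OF \<open>F \<subseteq> E\<close>] by (auto simp: raise_limits_def)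
  then show ?thesis
    using feasible_raise_on_iff[OF assms(2,3,4)] tide_increment_eq_Min[OF assms] by simp
qed

lemma raise_tide_increment_saturates:
  assumes "finite V" and "finite E" and "feasible V E cV cE mu" and "F \<subseteq> E" and "F \<noteq> {}"
  defines "mu' \<equiv> raise_on F (tide_increment V E cV cE mu F) mu"
  shows "\<exists>e\<in>F. esat cE mu' e \<or> (\<exists>i\<in>e. vsat E cV mu' i)"
proof -
  let ?C = "raise_limits V E cV cE mu F"
  have "finite ?C" "?C \<noteq> {}"
    using assms finite_subset[OF \<open>F \<subseteq> E\<close>] by (auto simp: raise_limits_def)
  then have "tide_increment V E cV cE mu F \<in> ?C"
    using tide_increment_eq_Min[OF assms(1-5)] by simp
  then consider (edge) e where "e \<in> F" "tide_increment V E cV cE mu F = cE e - mu e"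
    | (vertex) i e where "e \<in> F" "i \<in> e"
        "tide_increment V E cV cE mu F = (cV i - load E mu i) / real (card {e\<in>F. i \<in> e})"
    unfolding raise_limits_def by blast
  then show ?thesis
  proof cases
    case edge
    then show ?thesis by (intro bexI[of _ e]) (auto simp: mu'_def raise_on_def esat_def)
  next
    case vertex
    have "0 < card {e\<in>F. i \<in> e}"
      using vertex card_incident_pos[OF finite_subset[OF assms(4,2)]] by blast
    then have "vsat E cV mu' i"
      using vertex by (simp add: mu'_def vsat_def load_raise_on[OF assms(2,4)])
    then show ?thesis using vertex by blast
  qed
qed

section \<open>Runs of Rising-Tide\<close>

lemma edge_eq_doubleton:
  assumes "card e = 1 \<or> card e = 2" and "i \<in> e"
  shows "\<exists>j. e = {i, j}"
  using assms(1)
proof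
  assume "card e = 1"
  then obtain x where "e = {x}" by (rule card_1_singletonE)
  then show ?thesis using \<open>i \<in> e\<close> by (intro exI[of _ i]) simp
next
  assume "card e = 2"
  then obtain x y where "e = {x, y}" by (auto simp: card_2_iff)
  then show ?thesis using \<open>i \<in> e\<close> by (auto simp: insert_commute)
qed

definition edges_frozen_by :: "'a set set \<Rightarrow> ('a \<times> 'a) set \<Rightarrow> 'a \<Rightarrow> 'a set set" where
  "edges_frozen_by E D i = {e\<in>E. \<exists>j. e = {i, j} \<and> (j, i) \<in> D}"

locale capacitated_graph =
  fixes V :: "'a set" and E :: "'a set set" and cV :: "'a \<Rightarrow> real" and cE :: "'a set \<Rightarrow> real"
  assumes cap_graph: "cap_graph V E cV cE"
begin

lemma finite_V: "finite V"
  using cap_graph by (simp add: cap_graph_def)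

lemma finite_E: "finite E"
proof (rule finite_subset)
  show "E \<subseteq> Pow V" using cap_graph by (auto simp: cap_graph_def)
qed (simp add: finite_V)

lemma edge_subset_V: "e \<in> E \<Longrightarrow> e \<subseteq> V"
  and edge_card: "e \<in> E \<Longrightarrow> card e = 1 \<or> card e = 2"
  and edge_capacity_nonneg: "e \<in> E \<Longrightarrow> 0 \<le> cE e"
  using cap_graph by (auto simp: cap_graph_def)

abbreviation flow :: "nat \<Rightarrow> 'a set \<Rightarrow> real" where
  "flow k \<equiv> fst (rt_state V E cV cE k)"

abbreviation active :: "nat \<Rightarrow> 'a set set" where
  "active k \<equiv> snd (rt_state V E cV cE k)"

lemma flow_0: "flow 0 = (\<lambda>_. 0)" and active_0: "active 0 = {e\<in>E. 0 < cE e}"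
  by (simp_all add: rt_state_def)

lemma rt_state_Suc: "rt_state V E cV cE (Suc k) = rt_step V E cV cE (rt_state V E cV cE k)"
  by (simp add: rt_state_def)

lemma rt_state_Suc_idle: "active k = {} \<Longrightarrow> rt_state V E cV cE (Suc k) = rt_state V E cV cE k"
  by (simp add: rt_state_Suc rt_step_def)

lemma flow_Suc: "active k \<noteq> {} \<Longrightarrow>
    flow (Suc k) = raise_on (active k) (tide_increment V E cV cE (flow k) (active k)) (flow k)"
  and active_Suc: "active k \<noteq> {} \<Longrightarrow> active (Suc k) =
    {e\<in>active k. \<not> esat cE (flow (Suc k)) e \<and> (\<forall>i\<in>e. \<not> vsat E cV (flow (Suc k)) i)}"
  using rt_step_nonempty[of "active k" V E cV cE "flow k"]
  by (simp_all add: rt_state_Suc Let_def)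

lemma active_Suc_subset: "active (Suc k) \<subseteq> active k"
  by (cases "active k = {}") (simp_all add: rt_state_Suc_idle active_Suc)

lemma active_antimono: "k \<le> m \<Longrightarrow> active m \<subseteq> active k"
  using lift_Suc_antimono_le[of active] active_Suc_subset by blast

text \<open>All active edges have been raised in every round so far, so they carry a common value.\<close>
lemma rt_state_invariant:
  "feasible V E cV cE (flow k) \<and> active k \<subseteq> E \<and> (\<forall>e\<in>active k. \<forall>e'\<in>active k. flow k e = flow k e')"
proof (induction k)
  case 0
  show ?case using cap_graph by (auto simp: flow_0 active_0 feasible_def load_def cap_graph_def)
next
  case (Suc k)
  show ?case
  proof (cases "active k = {}")
    case True
    then show ?thesis using Suc.IH by (simp add: rt_state_Suc_idle)
  next
    case False
    have "feasible V E cV cE (flow (Suc k))"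
      unfolding flow_Suc[OF False]
      using Suc.IH False by (intro feasible_raise_tide_increment finite_V finite_E) auto
    moreover have "active (Suc k) \<subseteq> E"
      using Suc.IH active_Suc_subset by blast
    moreover have "flow (Suc k) e = flow (Suc k) e'" if "e \<in> active (Suc k)" "e' \<in> active (Suc k)" for e e'
    proof -
      have "e \<in> active k" "e' \<in> active k" using that active_Suc_subset by blast+
      moreover have "flow k e = flow k e'" using calculation Suc.IH by blast
      ultimately show ?thesis by (simp add: flow_Suc[OF False] raise_on_def)
    qed
    ultimately show ?thesis by blast
  qed
qed

lemma feasible_flow: "feasible V E cV cE (flow k)"
  and active_subset_E: "active k \<subseteq> E"
  and flow_eq_on_active: "e \<in> active k \<Longrightarrow> e' \<in> active k \<Longrightarrow> flow k e = flow k e'"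
  using rt_state_invariant by blast+

lemma flow_Suc_raise: "\<exists>d\<ge>0. flow (Suc k) = raise_on (active k) d (flow k)"
proof (cases "active k = {}")
  case True
  then show ?thesis by (intro exI[of _ 0]) (simp add: rt_state_Suc_idle raise_on_def)
next
  case False
  then show ?thesis
    using tide_increment_eq_Min(2)[OF finite_V finite_E feasible_flow active_subset_E False]
    by (auto simp: flow_Suc)
qed

lemma active_Suc_psubset:
  assumes "active k \<noteq> {}"
  shows "active (Suc k) \<subset> active k"
proof -
  obtain e where "e \<in> active k"
    and "esat cE (flow (Suc k)) e \<or> (\<exists>i\<in>e. vsat E cV (flow (Suc k)) i)"
    using raise_tide_increment_saturates[OF finite_V finite_E feasible_flow active_subset_E assms]
    unfolding flow_Suc[OF assms] by blast
  then have "e \<notin> active (Suc k)" using active_Suc[OF assms] by blast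
  then show ?thesis using \<open>e \<in> active k\<close> active_Suc_subset by blast
qed

lemma flow_frozen: "k \<le> m \<Longrightarrow> e \<notin> active k \<Longrightarrow> flow m e = flow k e"
proof (induction m rule: dec_induct)
  case (step m)
  then have "e \<notin> active m" using active_antimono by blast
  then show ?case using step flow_Suc_raise[of m] by (auto simp: raise_on_def)
qed simp

lemma vsat_flow_persists:
  assumes "k \<le> m" and "i \<in> V" and "vsat E cV (flow k) i"
  shows "vsat E cV (flow m) i"
  using assms(1)
proof (induction m rule: dec_induct)
  case (step m)
  have "load E (flow m) i \<le> load E (flow (Suc m)) i"
    using flow_Suc_raise[of m] unfolding load_def by (auto intro!: sum_mono simp: raise_on_def)
  moreover have "load E (flow (Suc m)) i \<le> cV i"
    using feasible_flow assms(2) by (simp add: feasible_def)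
  ultimately show ?case using step by (simp add: vsat_def)
qed (use assms in simp)

lemma active_card_bound: "active k \<noteq> {} \<Longrightarrow> card (active k) + k \<le> card (active 0)"
proof (induction k)
  case (Suc k)
  have "active k \<noteq> {}" using Suc.prems active_Suc_subset by blast
  moreover have "finite (active k)" using active_subset_E finite_E by (rule finite_subset)
  ultimately show ?case
    using Suc.IH psubset_card_mono[OF _ active_Suc_psubset] by fastforce
qed simp

definition final_round :: nat where
  "final_round = (LEAST k. active k = {})"

lemma active_final_round: "active final_round = {}"
proof -
  have "\<exists>k. active k = {}"
    using active_card_bound[of "Suc (card (active 0))"] by auto
  then show ?thesis unfolding final_round_def by (rule LeastI_ex)
qed

lemma rising_tide_eq_final_flow: "rising_tide V E cV cE = flow final_round"
  by (simp add: rising_tide_def final_round_def)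

lemma active_before_final_round: "e \<in> active r \<Longrightarrow> r < final_round"
  using active_antimono[of final_round r] active_final_round by (cases "r < final_round") auto

lemma rising_tide_eq_flow_after_removal:
  "e \<in> active r \<Longrightarrow> e \<notin> active (Suc r) \<Longrightarrow> rising_tide V E cV cE e = flow (Suc r) e"
  using flow_frozen[of "Suc r" final_round e] active_before_final_round[of e r]
  by (simp add: rising_tide_eq_final_flow)

lemma dep_graph_iff: "(j, i) \<in> dep_graph V E cV cE \<longleftrightarrow>
    (\<exists>k. {i, j} \<in> E \<and> {i, j} \<in> active k \<and> {i, j} \<notin> active (Suc k) \<and> vsat E cV (flow (Suc k)) i)"
  by (auto simp: dep_graph_def)

lemma removal_round:
  assumes "e \<in> active 0"
  obtains r where "e \<in> active r" and "e \<notin> active (Suc r)"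
proof -
  have "\<exists>r. \<not> e \<notin> active r \<and> e \<notin> active (Suc r)"
    using assms active_final_round by (intro exists_least_lemma) auto
  then show ?thesis using that by blast
qed

lemma inactive_after_vsat:
  assumes "vsat E cV (flow (Suc r)) i" and "i \<in> e"
  shows "e \<notin> active (Suc r)"
proof (cases "active r = {}")
  case True
  then show ?thesis using active_Suc_subset[of r] by blast
next
  case False
  then show ?thesis using assms active_Suc by blast
qed

abbreviation frozen_by :: "'a \<Rightarrow> 'a set set" where
  "frozen_by \<equiv> edges_frozen_by E (dep_graph V E cV cE)"

lemma edges_frozen_by_iff: "e \<in> frozen_by i \<longleftrightarrow> (\<exists>j k. e = {i, j} \<and> e \<in> E \<and> e \<in> active k
    \<and> e \<notin> active (Suc k) \<and> vsat E cV (flow (Suc k)) i)"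
  unfolding edges_frozen_by_def dep_graph_iff by blast

text \<open>An edge not frozen by an endpoint was removed because it became saturated itself, or was
  never active because its capacity is zero.\<close>
lemma rising_tide_saturates_unfrozen_edge:
  assumes e: "e \<in> E" and unfrozen: "\<forall>i\<in>V. e \<notin> frozen_by i"
  shows "rising_tide V E cV cE e = cE e"
proof (cases "0 < cE e")
  case False
  then have "e \<notin> active 0" and "cE e = 0" using active_0 edge_capacity_nonneg[OF e] by auto
  then show ?thesis
    using flow_frozen[of 0 final_round e] by (simp add: rising_tide_eq_final_flow flow_0)
next
  case True
  then obtain r where r: "e \<in> active r" "e \<notin> active (Suc r)"
    using removal_round e active_0 by blast
  have "\<not> vsat E cV (flow (Suc r)) i" if "i \<in> e" for i
  proof
    assume "vsat E cV (flow (Suc r)) i"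
    moreover obtain j where "e = {i, j}" using edge_eq_doubleton[OF edge_card[OF e] \<open>i \<in> e\<close>] ..
    ultimately have "e \<in> frozen_by i" unfolding edges_frozen_by_iff using e r by blast
    moreover have "i \<in> V" using edge_subset_V[OF e] \<open>i \<in> e\<close> by blast
    ultimately show False using unfrozen by blast
  qed
  then have "esat cE (flow (Suc r)) e" using r active_Suc[of r] by blast
  then show ?thesis using rising_tide_eq_flow_after_removal[OF r] by (simp add: esat_def)
qed

text \<open>Once a vertex saturates no incident edge stays active, so the edges frozen by a vertex are
  all removed in the same round; before it, as active edges, they carried a common value.\<close>
lemma rising_tide_eq_on_frozen_by:
  assumes "e \<in> frozen_by i" and "e' \<in> frozen_by i"
  shows "rising_tide V E cV cE e = rising_tide V E cV cE e'"
proof -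
  obtain r where r: "i \<in> e" "e \<in> active r" "e \<notin> active (Suc r)" "vsat E cV (flow (Suc r)) i"
    using assms(1) edges_frozen_by_iff by blast
  obtain r' where r': "i \<in> e'" "e' \<in> active r'" "e' \<notin> active (Suc r')" "vsat E cV (flow (Suc r')) i"
    using assms(2) edges_frozen_by_iff by blast
  have "\<not> r < r'"
    using inactive_after_vsat[OF r(4) r'(1)] active_antimono[of "Suc r" r'] r'(2) by auto
  moreover have "\<not> r' < r"
    using inactive_after_vsat[OF r'(4) r(1)] active_antimono[of "Suc r'" r] r(2) by auto
  ultimately have "r' = r" by simp
  then have "e' \<in> active r" using r'(2) by simp
  moreover obtain d where "flow (Suc r) = raise_on (active r) d (flow r)"
    using flow_Suc_raise by blast
  ultimately have "flow (Suc r) e = flow (Suc r) e'"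
    using r(2) flow_eq_on_active[OF r(2)] by (simp add: raise_on_def)
  then show ?thesis
    using rising_tide_eq_flow_after_removal r(2,3) r'(2,3) \<open>r' = r\<close> by metis
qed

lemma vsat_rising_tide_if_frozen_by:
  assumes "frozen_by i \<noteq> {}"
  shows "vsat E cV (rising_tide V E cV cE) i"
proof -
  obtain e where "e \<in> frozen_by i" using assms by blast
  then obtain j r where r: "e = {i, j}" "e \<in> E" "e \<in> active r" "vsat E cV (flow (Suc r)) i"
    unfolding edges_frozen_by_iff by blast
  then have "i \<in> V" using edge_subset_V by blast
  moreover have "Suc r \<le> final_round" using active_before_final_round[OF r(3)] by simp
  ultimately show ?thesis
    using vsat_flow_persists r(4) by (simp add: rising_tide_eq_final_flow)
qed

end

section \<open>Comparing two runs\<close>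

lemma abs_sum_minus_le_split_constant_part:
  fixes \<delta> :: "'b \<Rightarrow> real"
  assumes "finite X" and "A \<subseteq> X" and const: "\<And>e e'. e \<in> A \<Longrightarrow> e' \<in> A \<Longrightarrow> \<delta> e = \<delta> e'"
    and balanced: "A \<noteq> {} \<Longrightarrow> sum \<delta> X = d"
  shows "\<bar>sum \<delta> X - d\<bar> + (\<Sum>e\<in>A. \<bar>\<delta> e\<bar>) \<le> \<bar>d\<bar> + (\<Sum>e\<in>X - A. \<bar>\<delta> e\<bar>)"
proof (cases "A = {}")
  case True
  have "\<bar>sum \<delta> X - d\<bar> \<le> \<bar>sum \<delta> X\<bar> + \<bar>d\<bar>" by (rule abs_triangle_ineq4)
  then have "\<bar>sum \<delta> X - d\<bar> \<le> \<bar>d\<bar> + (\<Sum>e\<in>X. \<bar>\<delta> e\<bar>)"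
    using sum_abs[of \<delta> X] by linarith
  then show ?thesis using True by simp
next
  case False
  then obtain e0 where "e0 \<in> A" by blast
  then have const0: "\<delta> e = \<delta> e0" if "e \<in> A" for e using const that by blast
  have "(\<Sum>e\<in>A. \<bar>\<delta> e\<bar>) = (\<Sum>e\<in>A. \<bar>\<delta> e0\<bar>)"
    by (rule sum.cong[OF refl]) (metis const0)
  also have "\<dots> = \<bar>\<Sum>e\<in>A. \<delta> e0\<bar>" by (simp add: abs_mult)
  also have "(\<Sum>e\<in>A. \<delta> e0) = sum \<delta> A"
    by (rule sum.cong[OF refl]) (metis const0)
  also have "sum \<delta> A = d - sum \<delta> (X - A)"
    using balanced[OF False] sum.subset_diff[OF assms(2,1), of \<delta>] by simp
  also have "\<bar>d - sum \<delta> (X - A)\<bar> \<le> \<bar>d\<bar> + (\<Sum>e\<in>X - A. \<bar>\<delta> e\<bar>)"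
    using abs_triangle_ineq4[of d "sum \<delta> (X - A)"] sum_abs[of \<delta> "X - A"] by linarith
  finally show ?thesis using balanced[OF False] by simp
qed

text \<open>An edge charged to one endpoint has at most one further endpoint.\<close>
lemma sum_uncharged_le_sum_charged:
  fixes \<delta> :: "'b set \<Rightarrow> real" and A :: "'b \<Rightarrow> 'b set set"
  assumes "finite V" and "finite E" and small: "\<And>e. e \<in> E \<Longrightarrow> finite e \<and> card e \<le> 2"
    and A_incident: "\<And>i. A i \<subseteq> {e\<in>E. i \<in> e}"
    and uncharged_zero: "\<And>e. e \<in> E \<Longrightarrow> \<forall>i\<in>V. e \<notin> A i \<Longrightarrow> \<delta> e = 0"
  shows "(\<Sum>i\<in>V. \<Sum>e\<in>{e\<in>E. i \<in> e} - A i. \<bar>\<delta> e\<bar>) \<le> (\<Sum>i\<in>V. \<Sum>e\<in>A i. \<bar>\<delta> e\<bar>)"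
proof -
  have per_edge: "(\<Sum>i\<in>V. if i \<in> e \<and> e \<notin> A i then \<bar>\<delta> e\<bar> else 0)
      \<le> (\<Sum>i\<in>V. if e \<in> A i then \<bar>\<delta> e\<bar> else 0)" if "e \<in> E" for e
  proof (cases "\<forall>i\<in>V. e \<notin> A i")
    case True
    then have "\<delta> e = 0" using uncharged_zero[OF \<open>e \<in> E\<close>] by blast
    then show ?thesis by (simp cong: if_cong)
  next
    case False
    then obtain j where j: "j \<in> V" "e \<in> A j" by blast
    then have "j \<in> e" using A_incident by blast
    have "finite e" and "card e \<le> 2" using small[OF \<open>e \<in> E\<close>] by auto
    have "card {i\<in>V. i \<in> e \<and> e \<notin> A i} \<le> card (e - {j})"
      using \<open>finite e\<close> j by (intro card_mono) auto
    also have "\<dots> \<le> 1" using \<open>finite e\<close> \<open>j \<in> e\<close> \<open>card e \<le> 2\<close> by simp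
    finally have "real (card {i\<in>V. i \<in> e \<and> e \<notin> A i}) * \<bar>\<delta> e\<bar> \<le> \<bar>\<delta> e\<bar>"
      by (simp add: mult_left_le_one_le)
    then have "(\<Sum>i\<in>V. if i \<in> e \<and> e \<notin> A i then \<bar>\<delta> e\<bar> else 0) \<le> \<bar>\<delta> e\<bar>"
      using \<open>finite V\<close> by (simp add: sum.inter_filter[symmetric])
    also have "\<dots> \<le> (\<Sum>i\<in>V. if e \<in> A i then \<bar>\<delta> e\<bar> else 0)"
      using member_le_sum[OF j(1), of "\<lambda>i. if e \<in> A i then \<bar>\<delta> e\<bar> else 0"] j \<open>finite V\<close> by simp
    finally show ?thesis .
  qed
  have regroup: "(\<Sum>e\<in>{e\<in>E. i \<in> e} - A i. \<bar>\<delta> e\<bar>)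
      = (\<Sum>e\<in>E. if i \<in> e \<and> e \<notin> A i then \<bar>\<delta> e\<bar> else 0)"
    "(\<Sum>e\<in>A i. \<bar>\<delta> e\<bar>) = (\<Sum>e\<in>E. if e \<in> A i then \<bar>\<delta> e\<bar> else 0)" for i
    using \<open>finite E\<close> A_incident[of i] by (auto simp: sum.inter_filter[symmetric] intro!: sum.cong)
  have "(\<Sum>i\<in>V. \<Sum>e\<in>{e\<in>E. i \<in> e} - A i. \<bar>\<delta> e\<bar>)
      = (\<Sum>e\<in>E. \<Sum>i\<in>V. if i \<in> e \<and> e \<notin> A i then \<bar>\<delta> e\<bar> else 0)"
    unfolding regroup(1) by (rule sum.swap)
  also have "\<dots> \<le> (\<Sum>e\<in>E. \<Sum>i\<in>V. if e \<in> A i then \<bar>\<delta> e\<bar> else 0)"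
    by (rule sum_mono) (rule per_edge)
  also have "\<dots> = (\<Sum>i\<in>V. \<Sum>e\<in>A i. \<bar>\<delta> e\<bar>)"
    unfolding regroup(2) by (rule sum.swap[symmetric])
  finally show ?thesis .
qed

lemma sum_abs_residual_diff_le:
  fixes muG muH :: "'b set \<Rightarrow> real" and cG cH :: "'b \<Rightarrow> real" and A :: "'b \<Rightarrow> 'b set set"
  assumes "finite V" and "finite E" and "\<And>e. e \<in> E \<Longrightarrow> finite e \<and> card e \<le> 2"
    and A_incident: "\<And>i. A i \<subseteq> {e\<in>E. i \<in> e}"
    and agree: "\<And>e. e \<in> E \<Longrightarrow> \<forall>i\<in>V. e \<notin> A i \<Longrightarrow> muG e = muH e"
    and const: "\<And>i e e'. i \<in> V \<Longrightarrow> e \<in> A i \<Longrightarrow> e' \<in> A i \<Longrightarrow> muH e - muG e = muH e' - muG e'"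
    and saturated: "\<And>i. i \<in> V \<Longrightarrow> A i \<noteq> {} \<Longrightarrow> load E muG i = cG i \<and> load E muH i = cH i"
  shows "(\<Sum>i\<in>V. \<bar>(cG i - load E muG i) - (cH i - load E muH i)\<bar>) \<le> (\<Sum>i\<in>V. \<bar>cG i - cH i\<bar>)"
proof -
  define \<delta> where "\<delta> e = muH e - muG e" for e
  define X where "X i = {e\<in>E. i \<in> e}" for i
  have residual: "(cG i - load E muG i) - (cH i - load E muH i) = sum \<delta> (X i) - (cH i - cG i)" for i
    by (simp add: load_def \<delta>_def X_def sum_subtractf)
  have vertex: "\<bar>(cG i - load E muG i) - (cH i - load E muH i)\<bar> + (\<Sum>e\<in>A i. \<bar>\<delta> e\<bar>)
      \<le> \<bar>cG i - cH i\<bar> + (\<Sum>e\<in>X i - A i. \<bar>\<delta> e\<bar>)" if "i \<in> V" for i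
  proof -
    have "finite (X i)" and "A i \<subseteq> X i"
      using \<open>finite E\<close> A_incident by (auto simp: X_def)
    moreover have "\<delta> e = \<delta> e'" if "e \<in> A i" "e' \<in> A i" for e e'
      using const[OF \<open>i \<in> V\<close> that] by (simp add: \<delta>_def)
    moreover have "sum \<delta> (X i) = cH i - cG i" if "A i \<noteq> {}"
      using saturated[OF \<open>i \<in> V\<close> that] residual[of i] by simp
    ultimately have "\<bar>sum \<delta> (X i) - (cH i - cG i)\<bar> + (\<Sum>e\<in>A i. \<bar>\<delta> e\<bar>)
        \<le> \<bar>cH i - cG i\<bar> + (\<Sum>e\<in>X i - A i. \<bar>\<delta> e\<bar>)"
      by (rule abs_sum_minus_le_split_constant_part)
    then show ?thesis by (simp only: residual abs_minus_commute[of "cH i"])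
  qed
  have "(\<Sum>i\<in>V. \<bar>(cG i - load E muG i) - (cH i - load E muH i)\<bar>) + (\<Sum>i\<in>V. \<Sum>e\<in>A i. \<bar>\<delta> e\<bar>)
      \<le> (\<Sum>i\<in>V. \<bar>cG i - cH i\<bar>) + (\<Sum>i\<in>V. \<Sum>e\<in>X i - A i. \<bar>\<delta> e\<bar>)"
    using vertex by (simp add: sum.distrib[symmetric] sum_mono)
  moreover have "(\<Sum>i\<in>V. \<Sum>e\<in>X i - A i. \<bar>\<delta> e\<bar>) \<le> (\<Sum>i\<in>V. \<Sum>e\<in>A i. \<bar>\<delta> e\<bar>)"
    unfolding X_def using assms(1-4) agree
    by (intro sum_uncharged_le_sum_charged) (auto simp: \<delta>_def)
  ultimately show ?thesis by linarith
qed

lemma rising_tide_residual_diff_le: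
  assumes "cap_graph V E cVG cE" and "cap_graph V E cVH cE"
    and same_dep_graph: "dep_graph V E cVG cE = dep_graph V E cVH cE"
  shows "(\<Sum>i\<in>V. \<bar>(cVG i - load E (rising_tide V E cVG cE) i)
                    - (cVH i - load E (rising_tide V E cVH cE) i)\<bar>) \<le> (\<Sum>i\<in>V. \<bar>cVG i - cVH i\<bar>)"
proof (rule sum_abs_residual_diff_le[where A = "edges_frozen_by E (dep_graph V E cVG cE)"])
  interpret G: capacitated_graph V E cVG cE by unfold_locales (fact assms(1))
  interpret H: capacitated_graph V E cVH cE by unfold_locales (fact assms(2))
  have H_frozen_by: "H.frozen_by = G.frozen_by" using same_dep_graph by simp
  show "finite V" by (fact G.finite_V)
  show "finite E" by (fact G.finite_E)
  show "finite e \<and> card e \<le> 2" if "e \<in> E" for e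
    using G.edge_card[OF that] by (auto intro: card_ge_0_finite)
  show "G.frozen_by i \<subseteq> {e\<in>E. i \<in> e}" for i
    by (auto simp: edges_frozen_by_def)
  show "rising_tide V E cVG cE e = rising_tide V E cVH cE e"
    if "e \<in> E" "\<forall>i\<in>V. e \<notin> G.frozen_by i" for e
    using G.rising_tide_saturates_unfrozen_edge H.rising_tide_saturates_unfrozen_edge that
    by (simp add: H_frozen_by)
  show "rising_tide V E cVH cE e - rising_tide V E cVG cE e
      = rising_tide V E cVH cE e' - rising_tide V E cVG cE e'"
    if "i \<in> V" "e \<in> G.frozen_by i" "e' \<in> G.frozen_by i" for i e e'
    using G.rising_tide_eq_on_frozen_by[OF that(2,3)]
      H.rising_tide_eq_on_frozen_by[of e i e'] that(2,3) H_frozen_by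
    by simp
  show "load E (rising_tide V E cVG cE) i = cVG i \<and> load E (rising_tide V E cVH cE) i = cVH i"
    if "i \<in> V" "G.frozen_by i \<noteq> {}" for i
    using G.vsat_rising_tide_if_frozen_by H.vsat_rising_tide_if_frozen_by that
    by (simp add: H_frozen_by vsat_def)
qed

lemma sum_abs_diff_le_single_point:
  fixes f g :: "'a \<Rightarrow> real"
  assumes "finite V" and "\<forall>i\<in>V. i \<noteq> s \<longrightarrow> f i = g i"
  shows "(\<Sum>i\<in>V. \<bar>f i - g i\<bar>) \<le> \<bar>f s - g s\<bar>"
proof -
  have "(\<Sum>i\<in>V. \<bar>f i - g i\<bar>) = (\<Sum>i\<in>V. if i = s then \<bar>f s - g s\<bar> else 0)"
    using assms(2) by (intro sum.cong) auto
  then show ?thesis using assms(1) by simp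
qed

theorem lemma23:
  fixes V :: "'a set" and E :: "'a set set" and cVG cVH :: "'a \<Rightarrow> real"
    and cE :: "'a set \<Rightarrow> real" and s :: 'a
  assumes "cap_graph V E cVG cE" and "cap_graph V E cVH cE"
    and "\<forall>i\<in>V. i \<noteq> s \<longrightarrow> cVG i = cVH i"
    and "no_simul_sat V E cVG cE" and "no_simul_sat V E cVH cE"
    and "dep_graph V E cVG cE = dep_graph V E cVH cE"
  shows "(\<Sum>i\<in>V. \<bar>(cVG i - load E (rising_tide V E cVG cE) i)
                    - (cVH i - load E (rising_tide V E cVH cE) i)\<bar>) \<le> \<bar>cVG s - cVH s\<bar>"
proof -
  have "finite V" using assms(1) by (simp add: cap_graph_def)
  have "(\<Sum>i\<in>V. \<bar>(cVG i - load E (rising_tide V E cVG cE) i)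
                    - (cVH i - load E (rising_tide V E cVH cE) i)\<bar>) \<le> (\<Sum>i\<in>V. \<bar>cVG i - cVH i\<bar>)"
    using assms(1,2,6) by (rule rising_tide_residual_diff_le)
  also have "\<dots> \<le> \<bar>cVG s - cVH s\<bar>"
    using \<open>finite V\<close> assms(3) by (rule sum_abs_diff_le_single_point)
  finally show ?thesis .
qed

end
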